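(* Fix $\delta\in(0,1/2)$ and let $s=s(n)=\lfloor(1/2-\delta)n\rfloor$. Let $k=k(n)$ and $m=m(n)$ satisfy $k=o(\sqrt n)$ and $(1/2+\delta)^k m/n\to\infty$. Let $C_1,\dots,C_m$ be independent uniformly random $k$-clauses on the variables $x_1,\dots,x_n$. Then for every fixed $\zeta>0$, $$\Pr\Big(\big|m_S-(1/2+\delta)^k m\big|\le \zeta (1/2+\delta)^k m\ \text{ for all } S\subseteq[n] \text{ with } |S|=s\Big)\to 1 \quad (n\to\infty).$$
   Context: A uniformly random $k$-clause on $x_1,\dots,x_n$ is obtained by choosing a $k$-subset $K\subseteq[n]$ (its support) uniformly at random and a vector $g\in\{0,1\}^K$ uniformly at random; the clause is the Boolean function $C(x)=1$ iff $x_j=g_j$ for some $j\in K$ (an OR of $k$ literals on $k$ distinct variables). A clause $C_i$ misses $S\subseteq[n]$ if its support is contained in $[n]\setminus S$. For $S\subseteq[n]$, $m_S=|\{i\in[m]: C_i \text{ misses } S\}|$. *)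

theory Defs
  imports "HOL-Probability.Probability" "HOL-Library.Landau_Symbols"
begin

text \<open>A k-clause on variables x_1..x_n is given by its support K (a k-subset of {1..n})
  and a sign vector g in {0,1}^K (booleans). The clause is the Boolean function below.\<close>

definition kclauses :: "nat \<Rightarrow> nat \<Rightarrow> (nat set \<times> (nat \<Rightarrow> bool)) set" where
  "kclauses n k = {(K, g). K \<subseteq> {1..n} \<and> card K = k \<and> g \<in> K \<rightarrow>\<^sub>E (UNIV :: bool set)}"

definition clause_eval :: "nat set \<times> (nat \<Rightarrow> bool) \<Rightarrow> (nat \<Rightarrow> bool) \<Rightarrow> bool" where
  "clause_eval C x \<longleftrightarrow> (\<exists>j\<in>fst C. x j = snd C j)"

definition misses :: "nat \<Rightarrow> nat set \<times> (nat \<Rightarrow> bool) \<Rightarrow> nat set \<Rightarrow> bool" where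
  "misses n C S \<longleftrightarrow> fst C \<subseteq> {1..n} - S"

definition mS :: "nat \<Rightarrow> nat \<Rightarrow> (nat \<Rightarrow> nat set \<times> (nat \<Rightarrow> bool)) \<Rightarrow> nat set \<Rightarrow> nat" where
  "mS n m Cs S = card {i \<in> {1..m}. misses n (Cs i) S}"

text \<open>m independent uniformly random k-clauses = uniform distribution on m-tuples of k-clauses.\<close>
definition random_formula :: "nat \<Rightarrow> nat \<Rightarrow> nat \<Rightarrow> (nat \<Rightarrow> nat set \<times> (nat \<Rightarrow> bool)) pmf" where
  "random_formula n k m = pmf_of_set ({1..m} \<rightarrow>\<^sub>E kclauses n k)"

end

theory Submission
  imports Defs
begin

text \<open>
  A clause misses a fixed \<open>s\<close>-set \<open>S\<close> with probability \<open>C(n - s, k) / C(n, k)\<close>, and since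
  \<open>k = o(\<surd>n)\<close> this ratio is \<open>(1/2 + \<delta>)\<^sup>k\<close> up to a factor \<open>1 \<plusminus> o(1)\<close>. Thus \<open>m\<^sub>S\<close> is binomially
  distributed with mean \<open>\<mu> \<approx> (1/2 + \<delta>)\<^sup>k m\<close>, and the multiplicative Chernoff bound makes a relative
  deviation of order \<open>\<zeta>\<close> have probability \<open>exp (-\<Theta>(\<zeta>\<^sup>2 \<mu>))\<close>. Because \<open>\<mu>/n \<rightarrow> \<infinity>\<close> this is at most
  \<open>4\<^sup>-\<^sup>n\<close> eventually, which survives the union bound over the at most \<open>2\<^sup>n\<close> sets \<open>S\<close>.
\<close>

section \<open>Chernoff bounds for uniformly random functions\<close>

lemma sum_PiE_exp_card:
  fixes I :: "'i set" and A :: "'a set" and t :: real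
  assumes "finite I" and "finite A"
  shows "(\<Sum>f\<in>PiE I (\<lambda>_. A). exp (t * real (card {i\<in>I. P (f i)})))
         = (real (card A) + (exp t - 1) * real (card {a\<in>A. P a})) ^ card I"
proof -
  have exp_card: "exp (t * real (card {i\<in>I. P (f i)})) = (\<Prod>i\<in>I. if P (f i) then exp t else 1)" for f
  proof -
    have "(\<Prod>i\<in>I. if P (f i) then exp t else 1) = exp t ^ card {i\<in>I. P (f i)}"
      using prod.inter_filter[OF assms(1), of "\<lambda>_. exp t"] by simp
    then show ?thesis by (simp add: exp_of_nat_mult[symmetric] mult.commute)
  qed
  have sum_A: "(\<Sum>a\<in>A. if P a then exp t else 1) = real (card A) + (exp t - 1) * real (card {a\<in>A. P a})"
  proof -
    have "(\<Sum>a\<in>A. if P a then exp t else 1) = (\<Sum>a\<in>A. 1 + (if P a then exp t - 1 else 0))"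
      by (intro sum.cong) auto
    also have "\<dots> = real (card A) + (exp t - 1) * real (card {a\<in>A. P a})"
      using sum.inter_filter[OF assms(2), of "\<lambda>_. exp t - 1"] by (simp add: sum.distrib mult.commute)
    finally show ?thesis .
  qed
  have "(\<Sum>f\<in>PiE I (\<lambda>_. A). exp (t * real (card {i\<in>I. P (f i)})))
      = (\<Prod>i\<in>I. \<Sum>a\<in>A. if P a then exp t else 1)"
    unfolding exp_card by (rule prod_sum_PiE[symmetric]) (use assms in auto)
  then show ?thesis by (simp add: sum_A)
qed

lemma prob_PiE_count_exp_bound:
  fixes I :: "'i set" and A :: "'a set" and P :: "'a \<Rightarrow> bool" and t x :: real
  assumes "finite I" and "finite A" and "A \<noteq> {}"
  defines "\<mu> \<equiv> real (card I) * (real (card {a\<in>A. P a}) / real (card A))"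
  shows "measure_pmf.prob (pmf_of_set (PiE I (\<lambda>_. A))) {f. t * x \<le> t * real (card {i\<in>I. P (f i)})}
    \<le> exp (\<mu> * (exp t - 1) - t * x)"
proof -
  define p where "p = real (card {a\<in>A. P a}) / real (card A)"
  define U where "U = PiE I (\<lambda>_. A)"
  define X where "X f = real (card {i\<in>I. P (f i)})" for f
  define E where "E = {f. t * x \<le> t * X f}"
  have "finite U" "U \<noteq> {}"
    using assms(1-3) by (simp_all add: U_def finite_PiE PiE_eq_empty_iff)
  have card_A: "real (card A) > 0" using assms(2,3) by (simp add: card_gt_0_iff)
  have card_U: "real (card U) = real (card A) ^ card I"
    using assms(1) by (simp add: U_def card_PiE)
  have p_bounds: "0 \<le> p" "p \<le> 1"
    using card_A assms(2) by (auto simp: p_def divide_le_eq_1 card_mono)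
  \<comment> \<open>exponential Markov inequality, summed over the uniform sample space\<close>
  have "real (card (U \<inter> E)) * exp (t * x) = (\<Sum>f\<in>U \<inter> E. exp (t * x))" by simp
  also have "\<dots> \<le> (\<Sum>f\<in>U \<inter> E. exp (t * X f))"
    by (intro sum_mono) (auto simp: E_def)
  also have "\<dots> \<le> (\<Sum>f\<in>U. exp (t * X f))"
    by (intro sum_mono2) (use \<open>finite U\<close> in auto)
  also have "\<dots> = (real (card A) + (exp t - 1) * real (card {a\<in>A. P a})) ^ card I"
    unfolding U_def X_def by (rule sum_PiE_exp_card[OF assms(1,2)])
  also have "real (card A) + (exp t - 1) * real (card {a\<in>A. P a}) = real (card A) * (1 + (exp t - 1) * p)"
    using card_A by (simp add: p_def field_simps)
  also have "(real (card A) * (1 + (exp t - 1) * p)) ^ card I = real (card U) * (1 + (exp t - 1) * p) ^ card I"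
    by (simp add: card_U power_mult_distrib)
  also have "\<dots> \<le> real (card U) * exp ((exp t - 1) * p) ^ card I"
  proof (intro mult_left_mono power_mono)
    have "0 \<le> (1 - p) + exp t * p" using p_bounds by simp
    then show "0 \<le> 1 + (exp t - 1) * p" by (simp add: algebra_simps)
  qed simp_all
  also have "exp ((exp t - 1) * p) ^ card I = exp (\<mu> * (exp t - 1))"
    by (simp add: \<mu>_def p_def exp_of_nat_mult[symmetric] algebra_simps)
  finally have "real (card (U \<inter> E)) / real (card U) \<le> exp (\<mu> * (exp t - 1)) / exp (t * x)"
    using \<open>finite U\<close> \<open>U \<noteq> {}\<close> by (simp add: field_simps card_gt_0_iff)
  then show ?thesis
    using \<open>finite U\<close> \<open>U \<noteq> {}\<close>
    by (simp add: measure_pmf_of_set U_def E_def X_def exp_diff)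
qed

lemma exp_minus_le: "0 \<le> (u::real) \<Longrightarrow> exp (- u) \<le> 1 - u + u\<^sup>2"
proof -
  assume "0 \<le> u"
  then have "exp (- u) \<le> 1 / (1 + u)"
    using exp_ge_add_one_self[of u] by (simp add: exp_minus field_simps)
  also have "\<dots> \<le> 1 - u + u\<^sup>2"
    using \<open>0 \<le> u\<close> by (simp add: field_simps power2_eq_square)
  finally show ?thesis .
qed

context
  fixes I :: "'i set" and A :: "'a set" and P :: "'a \<Rightarrow> bool" and \<mu> \<epsilon> :: real
  assumes finite: "finite I" "finite A" and nonempty: "A \<noteq> {}" and eps: "0 < \<epsilon>" "\<epsilon> \<le> 1"
    and mean: "\<mu> = real (card I) * (real (card {a\<in>A. P a}) / real (card A))"
begin

lemma prob_PiE_count_ge: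
  "measure_pmf.prob (pmf_of_set (PiE I (\<lambda>_. A))) {f. (1 + \<epsilon>) * \<mu> \<le> real (card {i\<in>I. P (f i)})}
    \<le> exp (- (\<mu> * \<epsilon>\<^sup>2 / 4))"
proof -
  define t where "t = \<epsilon> / 2"
  have "0 \<le> \<mu>" by (simp add: mean)
  have "exp t - 1 \<le> t + t\<^sup>2" using exp_bound[of t] eps by (simp add: t_def)
  then have "\<mu> * (exp t - 1) - t * ((1 + \<epsilon>) * \<mu>) \<le> \<mu> * (t + t\<^sup>2) - t * ((1 + \<epsilon>) * \<mu>)"
    using \<open>0 \<le> \<mu>\<close> by (simp add: mult_left_mono)
  also have "\<dots> = - (\<mu> * \<epsilon>\<^sup>2 / 4)"
    by (simp add: t_def power2_eq_square field_simps)
  finally have exponent: "\<mu> * (exp t - 1) - t * ((1 + \<epsilon>) * \<mu>) \<le> - (\<mu> * \<epsilon>\<^sup>2 / 4)" .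
  have "measure_pmf.prob (pmf_of_set (PiE I (\<lambda>_. A))) {f. (1 + \<epsilon>) * \<mu> \<le> real (card {i\<in>I. P (f i)})}
     = measure_pmf.prob (pmf_of_set (PiE I (\<lambda>_. A))) {f. t * ((1 + \<epsilon>) * \<mu>) \<le> t * real (card {i\<in>I. P (f i)})}"
    using eps by (simp add: t_def)
  also have "\<dots> \<le> exp (\<mu> * (exp t - 1) - t * ((1 + \<epsilon>) * \<mu>))"
    by (rule prob_PiE_count_exp_bound[OF finite nonempty, where P=P, folded mean])
  also have "\<dots> \<le> exp (- (\<mu> * \<epsilon>\<^sup>2 / 4))"
    using exponent by simp
  finally show ?thesis .
qed

lemma prob_PiE_count_le:
  "measure_pmf.prob (pmf_of_set (PiE I (\<lambda>_. A))) {f. real (card {i\<in>I. P (f i)}) \<le> (1 - \<epsilon>) * \<mu>}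
    \<le> exp (- (\<mu> * \<epsilon>\<^sup>2 / 4))"
proof -
  define t where "t = \<epsilon> / 2"
  have "0 \<le> \<mu>" by (simp add: mean)
  have "exp (- t) - 1 \<le> - t + t\<^sup>2" using exp_minus_le[of t] eps by (simp add: t_def)
  then have "\<mu> * (exp (- t) - 1) + t * ((1 - \<epsilon>) * \<mu>) \<le> \<mu> * (- t + t\<^sup>2) + t * ((1 - \<epsilon>) * \<mu>)"
    using \<open>0 \<le> \<mu>\<close> by (simp add: mult_left_mono)
  also have "\<dots> = - (\<mu> * \<epsilon>\<^sup>2 / 4)"
    by (simp add: t_def power2_eq_square field_simps)
  finally have exponent: "\<mu> * (exp (- t) - 1) - (- t) * ((1 - \<epsilon>) * \<mu>) \<le> - (\<mu> * \<epsilon>\<^sup>2 / 4)" by simp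
  have "measure_pmf.prob (pmf_of_set (PiE I (\<lambda>_. A))) {f. real (card {i\<in>I. P (f i)}) \<le> (1 - \<epsilon>) * \<mu>}
     = measure_pmf.prob (pmf_of_set (PiE I (\<lambda>_. A))) {f. (- t) * ((1 - \<epsilon>) * \<mu>) \<le> (- t) * real (card {i\<in>I. P (f i)})}"
    using eps by (simp add: t_def)
  also have "\<dots> \<le> exp (\<mu> * (exp (- t) - 1) - (- t) * ((1 - \<epsilon>) * \<mu>))"
    by (rule prob_PiE_count_exp_bound[OF finite nonempty, where P=P, folded mean])
  also have "\<dots> \<le> exp (- (\<mu> * \<epsilon>\<^sup>2 / 4))"
    using exponent by simp
  finally show ?thesis .
qed

lemma prob_PiE_count_deviation:
  "measure_pmf.prob (pmf_of_set (PiE I (\<lambda>_. A))) {f. \<epsilon> * \<mu> < \<bar>real (card {i\<in>I. P (f i)}) - \<mu>\<bar>}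
    \<le> 2 * exp (- (\<mu> * \<epsilon>\<^sup>2 / 4))"
proof -
  let ?M = "pmf_of_set (PiE I (\<lambda>_. A))" and ?X = "\<lambda>f. real (card {i\<in>I. P (f i)})"
  have "measure_pmf.prob ?M {f. \<epsilon> * \<mu> < \<bar>?X f - \<mu>\<bar>}
      \<le> measure_pmf.prob ?M ({f. (1 + \<epsilon>) * \<mu> \<le> ?X f} \<union> {f. ?X f \<le> (1 - \<epsilon>) * \<mu>})"
    by (intro measure_pmf.finite_measure_mono) (auto simp: algebra_simps)
  also have "\<dots> \<le> measure_pmf.prob ?M {f. (1 + \<epsilon>) * \<mu> \<le> ?X f} + measure_pmf.prob ?M {f. ?X f \<le> (1 - \<epsilon>) * \<mu>}"
    by (rule measure_subadditive) simp_all
  also have "\<dots> \<le> 2 * exp (- (\<mu> * \<epsilon>\<^sup>2 / 4))"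
    using prob_PiE_count_ge prob_PiE_count_le by simp
  finally show ?thesis .
qed

end

section \<open>Clause counts and binomial ratios\<close>

lemma card_clauses_on:
  assumes "finite X"
  shows "card {(K, g). K \<subseteq> X \<and> card K = k \<and> g \<in> K \<rightarrow>\<^sub>E (UNIV :: bool set)} = (card X choose k) * 2 ^ k"
proof -
  let ?supports = "{K. K \<subseteq> X \<and> card K = k}"
  have "{(K, g). K \<subseteq> X \<and> card K = k \<and> g \<in> K \<rightarrow>\<^sub>E (UNIV :: bool set)}
      = Sigma ?supports (\<lambda>K. K \<rightarrow>\<^sub>E (UNIV :: bool set))"
    by auto
  also have "card \<dots> = (\<Sum>K\<in>?supports. card (K \<rightarrow>\<^sub>E (UNIV :: bool set)))"
    by (rule card_SigmaI) (use assms in \<open>auto intro!: finite_PiE dest: finite_subset\<close>)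
  also have "\<dots> = (\<Sum>K\<in>?supports. 2 ^ k)"
    by (intro sum.cong refl) (auto simp: card_PiE dest: finite_subset[OF _ assms])
  also have "\<dots> = (card X choose k) * 2 ^ k"
    using assms by (simp add: n_subsets)
  finally show ?thesis .
qed

lemma card_kclauses: "card (kclauses n k) = (n choose k) * 2 ^ k"
  unfolding kclauses_def by (simp add: card_clauses_on)

lemma card_kclauses_misses:
  assumes "S \<subseteq> {1..n}"
  shows "card {C \<in> kclauses n k. misses n C S} = (n - card S choose k) * 2 ^ k"
proof -
  have "{C \<in> kclauses n k. misses n C S}
      = {(K, g). K \<subseteq> {1..n} - S \<and> card K = k \<and> g \<in> K \<rightarrow>\<^sub>E (UNIV :: bool set)}"
    unfolding kclauses_def misses_def by auto
  moreover have "card ({1..n} - S) = n - card S"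
    using assms by (simp add: card_Diff_subset finite_subset)
  ultimately show ?thesis by (simp add: card_clauses_on)
qed

lemma choose_ratio_eq_prod:
  assumes "k \<le> n"
  shows "real (a choose k) / real (n choose k) = (\<Prod>i<k. (real a - real i) / (real n - real i))"
  using assms by (simp add: binomial_gbinomial gbinomial_prod_rev prod_dividef atLeast0LessThan)

lemma choose_ratio_bounds:
  assumes "k \<le> a" "a \<le> n" "0 < n"
  shows "((real a - real k) / real n) ^ k \<le> real (a choose k) / real (n choose k)"
    and "real (a choose k) / real (n choose k) \<le> (real a / real n) ^ k"
proof -
  have factor_bounds: "0 \<le> (real a - real k) / real n"
    "(real a - real k) / real n \<le> (real a - real i) / (real n - real i)"
    "(real a - real i) / (real n - real i) \<le> real a / real n"
    if "i < k" for i
  proof -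
    have "real i * real n \<le> real k * real n" "real i * real k \<le> real i * real a"
      and "real i * real a \<le> real i * real n"
      using that assms by (intro mult_right_mono mult_left_mono; simp)+
    then have "(real a - real k) * (real n - real i) \<le> (real a - real i) * real n"
      and "(real a - real i) * real n \<le> real a * (real n - real i)"
      by (simp_all add: algebra_simps)
    then show "0 \<le> (real a - real k) / real n"
      "(real a - real k) / real n \<le> (real a - real i) / (real n - real i)"
      "(real a - real i) / (real n - real i) \<le> real a / real n"
      using that assms by (simp_all add: divide_le_eq le_divide_eq)
  qed
  have ratio: "real (a choose k) / real (n choose k) = (\<Prod>i<k. (real a - real i) / (real n - real i))"
    using assms by (intro choose_ratio_eq_prod) simp
  have "(\<Prod>i<k. (real a - real k) / real n) \<le> (\<Prod>i<k. (real a - real i) / (real n - real i))"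
    using factor_bounds by (intro prod_mono) auto
  then show "((real a - real k) / real n) ^ k \<le> real (a choose k) / real (n choose k)"
    by (simp add: ratio)
  have "(\<Prod>i<k. (real a - real i) / (real n - real i)) \<le> (\<Prod>i<k. real a / real n)"
    using factor_bounds by (intro prod_mono) (auto intro: order.trans)
  then show "real (a choose k) / real (n choose k) \<le> (real a / real n) ^ k"
    by (simp add: ratio)
qed

lemma choose_ratio_approx:
  fixes n k a :: nat and q \<eta> :: real
  assumes "0 < q" "0 < n" "q * n \<le> a" "a \<le> q * n + 1" "a \<le> n"
    and "0 \<le> \<eta>" "\<eta> \<le> 1" "real k ^ 2 \<le> q * \<eta> / 2 * n"
  shows "\<bar>real (a choose k) / real (n choose k) - q ^ k\<bar> \<le> \<eta> * q ^ k"
proof -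
  define x where "x = real k / (q * n)"
  have qn: "0 < q * n" using assms by simp
  have "real k \<le> real k ^ 2" by (cases k) (auto simp: power2_eq_square)
  moreover have "q * \<eta> / 2 * n \<le> q * n"
    using assms by (simp add: field_simps mult_left_le)
  ultimately have k_le: "real k \<le> q * \<eta> / 2 * n" "real k \<le> q * n"
    using assms(8) by linarith+
  then have "k \<le> a" using assms(3) by linarith
  have x_bounds: "0 \<le> x" "x \<le> \<eta> / 2" "real k * x \<le> \<eta> / 2"
  proof -
    show "0 \<le> x" using qn by (simp add: x_def)
    show "x \<le> \<eta> / 2"
      using k_le(1) qn by (simp add: x_def pos_divide_le_eq mult_ac)
    show "real k * x \<le> \<eta> / 2"
      using assms(8) qn by (simp add: x_def pos_divide_le_eq power2_eq_square mult_ac)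
  qed
  have "real (a choose k) / real (n choose k) \<le> (real a / real n) ^ k"
    using choose_ratio_bounds(2)[OF \<open>k \<le> a\<close> assms(5,2)] .
  also have "\<dots> \<le> (q + 1 / n) ^ k"
    using assms by (intro power_mono) (simp_all add: divide_le_eq distrib_right)
  also have "q + 1 / n = q * (1 + 1 / (q * n))"
    using assms by (simp add: field_simps)
  also have "(q * (1 + 1 / (q * n))) ^ k \<le> q ^ k * exp (1 / (q * n)) ^ k"
    unfolding power_mult_distrib using assms exp_ge_add_one_self[of "1 / (q * n)"]
    by (intro mult_left_mono power_mono) (simp_all add: add.commute)
  also have "exp (1 / (q * n)) ^ k = exp x"
    by (simp add: x_def exp_of_nat_mult[symmetric])
  also have "q ^ k * exp x \<le> q ^ k * (1 + \<eta>)"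
    using real_exp_bound_lemma[of x] x_bounds assms by (intro mult_left_mono) auto
  finally have upper: "real (a choose k) / real (n choose k) \<le> (1 + \<eta>) * q ^ k"
    by (simp add: mult.commute)
  have "(1 - \<eta>) * q ^ k \<le> (1 - real k * x) * q ^ k"
    using x_bounds assms by (intro mult_right_mono) auto
  also have "\<dots> \<le> (1 - x) ^ k * q ^ k"
    using Bernoulli_inequality[of "- x" k] x_bounds assms by (intro mult_right_mono) auto
  also have "\<dots> = (q - real k / n) ^ k"
  proof -
    have "(1 - x) * q = q - real k / n"
      using qn assms(1) by (simp add: x_def field_simps)
    then show ?thesis
      by (simp flip: power_mult_distrib)
  qed
  also have "\<dots> \<le> ((real a - real k) / real n) ^ k"
  proof (rule power_mono)
    show "0 \<le> q - real k / n"
      using k_le(2) assms(2) by (simp add: divide_le_eq mult.commute)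
    show "q - real k / n \<le> (real a - real k) / real n"
      using assms(2,3) by (simp add: diff_divide_distrib le_divide_eq mult.commute)
  qed
  also have "\<dots> \<le> real (a choose k) / real (n choose k)"
    using choose_ratio_bounds(1)[OF \<open>k \<le> a\<close> assms(5,2)] .
  finally show ?thesis
    using upper by (simp add: abs_le_iff algebra_simps)
qed

lemma eventually_sq_le_of_smallo_sqrt:
  fixes f :: "nat \<Rightarrow> nat" and c :: real
  assumes "(\<lambda>n. real (f n)) \<in> o(\<lambda>n. sqrt (real n))" "0 < c"
  shows "eventually (\<lambda>n. real (f n) ^ 2 \<le> c * real n) sequentially"
proof -
  have "eventually (\<lambda>n. norm (real (f n)) \<le> sqrt c * norm (sqrt (real n))) sequentially"
    using landau_o.smallD[OF assms(1)] assms(2) by simp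
  then show ?thesis
  proof eventually_elim
    case (elim n)
    then have "real (f n) ^ 2 \<le> (sqrt c * sqrt (real n)) ^ 2"
      by (intro power_mono) auto
    then show ?case
      using assms(2) by (simp add: power_mult_distrib)
  qed
qed

lemma nat_floor_complement_bounds:
  fixes r :: real and n :: nat
  assumes "0 \<le> r" "r \<le> 1"
  shows "(1 - r) * n \<le> real (n - nat \<lfloor>r * n\<rfloor>)"
    and "real (n - nat \<lfloor>r * n\<rfloor>) \<le> (1 - r) * n + 1"
proof -
  have "0 \<le> r * n" "r * n \<le> n"
    using assms by (simp_all add: mult_left_le_one_le)
  then have "nat \<lfloor>r * n\<rfloor> \<le> n" "real (nat \<lfloor>r * n\<rfloor>) \<le> r * n" "r * n < real (nat \<lfloor>r * n\<rfloor>) + 1"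
    by linarith+
  then show "(1 - r) * n \<le> real (n - nat \<lfloor>r * n\<rfloor>)" "real (n - nat \<lfloor>r * n\<rfloor>) \<le> (1 - r) * n + 1"
    by (simp_all add: of_nat_diff algebra_simps)
qed

lemma eventually_choose_ratio_approx:
  fixes k :: "nat \<Rightarrow> nat" and q \<eta> :: real
  assumes "(\<lambda>n. real (k n)) \<in> o(\<lambda>n. sqrt (real n))" "0 < q" "q \<le> 1" "0 < \<eta>" "\<eta> \<le> 1"
  shows "eventually (\<lambda>n. \<bar>real (n - nat \<lfloor>(1 - q) * n\<rfloor> choose k n) / real (n choose k n) - q ^ k n\<bar>
           \<le> \<eta> * q ^ k n) sequentially"
proof -
  have "eventually (\<lambda>n. real (k n) ^ 2 \<le> q * \<eta> / 2 * real n) sequentially"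
    by (rule eventually_sq_le_of_smallo_sqrt[OF assms(1)]) (use assms in simp)
  moreover have "eventually (\<lambda>n. 0 < n) sequentially"
    by (rule eventually_gt_at_top)
  ultimately show ?thesis
  proof eventually_elim
    case (elim n)
    then show ?case
      using choose_ratio_approx[of q n "n - nat \<lfloor>(1 - q) * n\<rfloor>" \<eta> "k n"]
        nat_floor_complement_bounds[of "1 - q" n] assms(2-5) by simp
  qed
qed

section \<open>Concentration of \<open>m\<^sub>S\<close>\<close>

lemma prob_mS_deviation:
  fixes n k m :: nat and S :: "nat set" and \<epsilon> :: real
  assumes "S \<subseteq> {1..n}" "k \<le> n" "0 < \<epsilon>" "\<epsilon> \<le> 1"
  defines "\<mu> \<equiv> real m * (real (n - card S choose k) / real (n choose k))"
  shows "measure_pmf.prob (random_formula n k m) {Cs. \<epsilon> * \<mu> < \<bar>real (mS n m Cs S) - \<mu>\<bar>}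
    \<le> 2 * exp (- (\<mu> * \<epsilon>\<^sup>2 / 4))"
proof -
  have "card (kclauses n k) > 0"
    using assms(2) by (simp add: card_kclauses)
  then have "finite (kclauses n k)" "kclauses n k \<noteq> {}"
    by (auto simp: card_gt_0_iff)
  moreover have "\<mu> = real (card {1..m}) * (real (card {C \<in> kclauses n k. misses n C S}) / real (card (kclauses n k)))"
    using assms(1) by (simp add: \<mu>_def card_kclauses card_kclauses_misses)
  ultimately show ?thesis
    unfolding random_formula_def mS_def
    using prob_PiE_count_deviation[of "{1..m}" "kclauses n k" \<epsilon> \<mu> "\<lambda>C. misses n C S"] assms(3,4)
    by simp
qed

lemma prob_mS_not_close:
  fixes n k m s :: nat and q \<epsilon> \<zeta> :: real
  assumes "0 < q" "0 < \<epsilon>" "\<epsilon> \<le> 1/4" "3 * \<epsilon> \<le> \<zeta>"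
    and ratio: "\<bar>real (n - s choose k) / real (n choose k) - q ^ k\<bar> \<le> \<epsilon> * q ^ k"
    and large: "real n * ln 4 \<le> 3/16 * \<epsilon>\<^sup>2 * (q ^ k * real m)"
    and S: "S \<subseteq> {1..n}" "card S = s"
  shows "measure_pmf.prob (random_formula n k m)
           {Cs. \<not> \<bar>real (mS n m Cs S) - q ^ k * real m\<bar> \<le> \<zeta> * (q ^ k * real m)} \<le> 2 * (1/4) ^ n"
proof -
  define \<mu> where "\<mu> = q ^ k * real m"
  define \<mu>' where "\<mu>' = real m * (real (n - s choose k) / real (n choose k))"
  have "0 \<le> \<mu>" using assms(1) by (simp add: \<mu>_def)
  have "\<mu>' - \<mu> = real m * (real (n - s choose k) / real (n choose k) - q ^ k)"
    by (simp add: \<mu>_def \<mu>'_def algebra_simps)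
  then have mean_close: "\<bar>\<mu>' - \<mu>\<bar> \<le> \<epsilon> * \<mu>"
    using mult_left_mono[OF ratio, of "real m"] by (simp add: abs_mult \<mu>_def mult_ac)
  have "0 < (1 - \<epsilon>) * q ^ k"
    using assms(1,3) by simp
  also have "(1 - \<epsilon>) * q ^ k \<le> real (n - s choose k) / real (n choose k)"
    using ratio by (simp add: abs_le_iff algebra_simps)
  finally have "k \<le> n"
    by (rule contrapos_pp) (simp add: binomial_eq_0)
  \<comment> \<open>the Chernoff window around the true mean \<open>\<mu>'\<close> fits inside the window around \<open>\<mu>\<close>\<close>
  have "\<epsilon> * \<mu>' \<le> \<epsilon> * ((1 + \<epsilon>) * \<mu>)"
    using mean_close assms(2) by (intro mult_left_mono) (auto simp: abs_le_iff algebra_simps)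
  moreover have "\<epsilon> * \<epsilon> * \<mu> \<le> 1 * \<epsilon> * \<mu>"
    using assms(2,3) \<open>0 \<le> \<mu>\<close> by (intro mult_right_mono) auto
  moreover have "3 * \<epsilon> * \<mu> \<le> \<zeta> * \<mu>"
    using mult_right_mono[OF assms(4) \<open>0 \<le> \<mu>\<close>] .
  ultimately have "{Cs. \<not> \<bar>real (mS n m Cs S) - \<mu>\<bar> \<le> \<zeta> * \<mu>} \<subseteq> {Cs. \<epsilon> * \<mu>' < \<bar>real (mS n m Cs S) - \<mu>'\<bar>}"
    using mean_close by (auto simp: algebra_simps)
  then have "measure_pmf.prob (random_formula n k m) {Cs. \<not> \<bar>real (mS n m Cs S) - \<mu>\<bar> \<le> \<zeta> * \<mu>}
      \<le> measure_pmf.prob (random_formula n k m) {Cs. \<epsilon> * \<mu>' < \<bar>real (mS n m Cs S) - \<mu>'\<bar>}"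
    by (rule measure_pmf.finite_measure_mono) simp
  also have "\<dots> \<le> 2 * exp (- (\<mu>' * \<epsilon>\<^sup>2 / 4))"
    using prob_mS_deviation[of S n k \<epsilon> m] S \<open>k \<le> n\<close> assms(2,3) by (simp add: \<mu>'_def)
  also have "exp (- (\<mu>' * \<epsilon>\<^sup>2 / 4)) \<le> exp (- (real n * ln 4))"
  proof -
    have "3/4 * \<mu> \<le> \<mu>'"
      using mean_close \<open>0 \<le> \<mu>\<close> mult_right_mono[OF assms(3) \<open>0 \<le> \<mu>\<close>] by linarith
    then have "3/16 * \<epsilon>\<^sup>2 * \<mu> \<le> \<mu>' * \<epsilon>\<^sup>2 / 4"
      using mult_right_mono[of "3/4 * \<mu>" \<mu>' "\<epsilon>\<^sup>2 / 4"] by simp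
    then have "real n * ln 4 \<le> \<mu>' * \<epsilon>\<^sup>2 / 4"
      using large unfolding \<mu>_def by linarith
    then show ?thesis
      by simp
  qed
  also have "exp (- (real n * ln 4)) = (1/4) ^ n"
    by (simp add: exp_minus exp_of_nat_mult power_one_over inverse_eq_divide)
  finally show ?thesis
    by (simp add: \<mu>_def)
qed

lemma prob_all_mS_close:
  fixes n k m s :: nat and q \<epsilon> \<zeta> :: real
  assumes "0 < q" "0 < \<epsilon>" "\<epsilon> \<le> 1/4" "3 * \<epsilon> \<le> \<zeta>"
    and "\<bar>real (n - s choose k) / real (n choose k) - q ^ k\<bar> \<le> \<epsilon> * q ^ k"
    and "real n * ln 4 \<le> 3/16 * \<epsilon>\<^sup>2 * (q ^ k * real m)"
  shows "1 - 2 * (1/2) ^ n \<le> measure_pmf.prob (random_formula n k m)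
            {Cs. \<forall>S. S \<subseteq> {1..n} \<and> card S = s \<longrightarrow>
               \<bar>real (mS n m Cs S) - q ^ k * real m\<bar> \<le> \<zeta> * q ^ k * real m}"
proof -
  define M where "M = random_formula n k m"
  define Bad where "Bad S = {Cs. \<not> \<bar>real (mS n m Cs S) - q ^ k * real m\<bar> \<le> \<zeta> * (q ^ k * real m)}" for S
  let ?sets = "{S. S \<subseteq> {1..n} \<and> card S = s}"
  have "measure_pmf.prob M (\<Union>S\<in>?sets. Bad S) \<le> (\<Sum>S\<in>?sets. measure_pmf.prob M (Bad S))"
    by (rule measure_pmf.finite_measure_subadditive_finite) auto
  also have "\<dots> \<le> (\<Sum>S\<in>?sets. 2 * (1/4) ^ n)"
    using prob_mS_not_close[OF assms] by (intro sum_mono) (auto simp: M_def Bad_def)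
  also have "\<dots> \<le> 2 ^ n * (2 * (1/4) ^ n)"
    using card_mono[of "Pow {1..n}" ?sets] by (auto simp: card_Pow)
  also have "\<dots> = 2 * (1/2) ^ n"
    by (simp add: power_mult_distrib[symmetric])
  finally have "measure_pmf.prob M (\<Union>S\<in>?sets. Bad S) \<le> 2 * (1/2) ^ n" .
  moreover have "{Cs. \<forall>S. S \<subseteq> {1..n} \<and> card S = s \<longrightarrow>
               \<bar>real (mS n m Cs S) - q ^ k * real m\<bar> \<le> \<zeta> * q ^ k * real m} = UNIV - (\<Union>S\<in>?sets. Bad S)"
    by (auto simp: Bad_def mult.assoc)
  ultimately show ?thesis
    using measure_pmf.prob_compl[of "\<Union>S\<in>?sets. Bad S" M] by (simp add: M_def)
qed

theorem lemma3p1: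
  fixes \<delta> \<zeta> :: real and k m s :: "nat \<Rightarrow> nat"
  assumes "0 < \<delta>" "\<delta> < 1/2"
    and "\<And>n. s n = nat \<lfloor>(1/2 - \<delta>) * real n\<rfloor>"
    and "(\<lambda>n. real (k n)) \<in> o(\<lambda>n. sqrt (real n))"
    and "filterlim (\<lambda>n. (1/2 + \<delta>) ^ k n * real (m n) / real n) at_top sequentially"
    and "\<zeta> > 0"
  shows "(\<lambda>n. measure_pmf.prob (random_formula n (k n) (m n))
            {Cs. \<forall>S. S \<subseteq> {1..n} \<and> card S = s n \<longrightarrow>
               \<bar>real (mS n (m n) Cs S) - (1/2 + \<delta>) ^ k n * real (m n)\<bar>
                 \<le> \<zeta> * (1/2 + \<delta>) ^ k n * real (m n)})
         \<longlonglongrightarrow> 1"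
proof -
  define q where "q = 1/2 + \<delta>"
  define \<epsilon> where "\<epsilon> = min \<zeta> 1 / 4"
  have q: "0 < q" "q \<le> 1" "\<And>n. s n = nat \<lfloor>(1 - q) * n\<rfloor>"
    and \<epsilon>: "0 < \<epsilon>" "\<epsilon> \<le> 1/4" "3 * \<epsilon> \<le> \<zeta>"
    using assms(1-3,6) by (auto simp: q_def \<epsilon>_def)
  have "eventually (\<lambda>n. \<bar>real (n - s n choose k n) / real (n choose k n) - q ^ k n\<bar> \<le> \<epsilon> * q ^ k n) sequentially"
    unfolding q(3) by (rule eventually_choose_ratio_approx[OF assms(4) q(1,2)]) (use \<epsilon> in simp_all)
  moreover have "eventually (\<lambda>n. 16 * ln 4 / (3 * \<epsilon>\<^sup>2) \<le> q ^ k n * real (m n) / real n) sequentially"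
    using assms(5) by (simp add: filterlim_at_top q_def)
  moreover have "eventually (\<lambda>n. 0 < n) sequentially"
    by (rule eventually_gt_at_top)
  ultimately have lower_bound: "eventually (\<lambda>n. 1 - 2 * (1/2) ^ n \<le> measure_pmf.prob (random_formula n (k n) (m n))
            {Cs. \<forall>S. S \<subseteq> {1..n} \<and> card S = s n \<longrightarrow>
               \<bar>real (mS n (m n) Cs S) - q ^ k n * real (m n)\<bar> \<le> \<zeta> * q ^ k n * real (m n)}) sequentially"
  proof eventually_elim
    case (elim n)
    have "real n * ln 4 \<le> 3/16 * \<epsilon>\<^sup>2 * (q ^ k n * real (m n))"
      using elim(2,3) \<epsilon> by (simp add: field_simps)
    with elim(1) show ?case
      by (rule prob_all_mS_close[OF q(1) \<epsilon>])
  qed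
  have "(\<lambda>n. 1 - 2 * (1/2::real) ^ n) \<longlonglongrightarrow> 1"
    by (auto intro!: tendsto_eq_intros LIMSEQ_power_zero)
  from tendsto_sandwich[OF lower_bound _ this tendsto_const] show ?thesis
    unfolding q_def by simp
qed

end
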